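(* Let $A,B,C$ be type expressions. (1) If $\bullet A\cong B\to C$, then $A\cong C\cong\top$. (2) If $\bullet A\simeq B\to C$, then either (a) $A\simeq C\simeq\top$, or (b) there exist type expressions $D,E$ with $A\simeq D\to E$, $\bullet D\simeq B$ and $\bullet E\simeq C$.
   Context: Type expressions: fix a countably infinite set of type variables $X,Y,Z,\dots$. Pseudo type expressions are generated by $A::=X\mid A\to A\mid \bullet A\mid \mu X.A$ ($\mu$ binds $X$; $\alpha$-convertible expressions are identified; $\to$ associates to the right; $\bullet$ binds tighter than $\to$, which binds tighter than $\mu$). $A[B/X]$ denotes capture-avoiding substitution. $\top$ abbreviates $\mu X.\bullet X$, and $\bullet^n A$ denotes $A$ prefixed by $n$ copies of $\bullet$. The tail $t(A)$ is defined by $t(X)=X$, $t(A\to B)=t(B)$, $t(\bullet A)=\bullet t(A)$, $t(\mu X.A)=\mu X.t(A)$; it always has the form $\bullet^{m_0}\mu X_1.\bullet^{m_1}\mu X_2.\cdots\mu X_n.\bullet^{m_n}Y$. $A$ is a $\top$-variant iff $Y=X_i$ for some $1\le i\le n$ with $X_i\notin\{X_{i+1},\dots,X_n\}$ and $m_i+\dots+m_n\ge 1$. $A$ is proper in $X$ iff: a variable $Y$ is proper in $X$ iff $Y\neq X$; $\bullet A$ is always proper in $X$; $A\to B$ is proper in $X$ iff both $A,B$ are proper in $X$ or $B$ is a $\top$-variant; for $Y\ne X$, $\mu Y.A$ is proper in $X$ iff $A$ is proper in $X$ or $\mu Y.A$ is a $\top$-variant. Type expressions are the least set of pseudo type expressions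 containing all type variables, closed under $\to$ and $\bullet$, and containing $\mu X.A$ whenever it contains $A$ and $A$ is proper in $X$. Equality: $\cong$ is the least relation on type expressions such that: $A\cong A$; $A\cong B$ implies $B\cong A$; $A\cong B$ and $B\cong C$ imply $A\cong C$; $A\cong B$ implies $\bullet A\cong\bullet B$; $A\cong C$ and $B\cong D$ imply $A\to B\cong C\to D$; $A\to\top\cong\top$; $\mu X.A\cong A[\mu X.A/X]$; and if $A\cong C[A/X]$ with $C$ proper in $X$, then $A\cong\mu X.C$. $\simeq$ is the least relation satisfying the same closure conditions and additionally $\bullet(A\to B)\simeq\bullet A\to\bullet B$. *)

theory Defs
  imports Main
begin

text \<open>Pseudo type expressions, with alpha-equivalence built in via de Bruijn indices.
  Var j is the variable bound by the (j+1)-th enclosing Mu, or, if there are fewer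
  enclosing binders, a free variable.\<close>
datatype ty = Var nat | Arr ty ty | Later ty | Mu ty

fun lift :: "nat \<Rightarrow> ty \<Rightarrow> ty" where
  "lift k (Var j) = (if j < k then Var j else Var (Suc j))"
| "lift k (Arr A B) = Arr (lift k A) (lift k B)"
| "lift k (Later A) = Later (lift k A)"
| "lift k (Mu A) = Mu (lift (Suc k) A)"

fun subst :: "nat \<Rightarrow> ty \<Rightarrow> ty \<Rightarrow> ty" where
  "subst k s (Var j) = (if j < k then Var j else if j = k then s else Var (j - 1))"
| "subst k s (Arr A B) = Arr (subst k s A) (subst k s B)"
| "subst k s (Later A) = Later (subst k s A)"
| "subst k s (Mu A) = Mu (subst (Suc k) (lift 0 s) A)"

definition top :: ty where "top = Mu (Later (Var 0))"

text \<open>Walk along the tail t(A). The list g records, for each Mu binder met so far in the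
  tail (innermost first), whether at least one bullet occurs after it.\<close>
fun topv :: "bool list \<Rightarrow> ty \<Rightarrow> bool" where
  "topv g (Var j) = (j < length g \<and> g ! j)"
| "topv g (Arr A B) = topv g B"
| "topv g (Later A) = topv (map (\<lambda>_. True) g) A"
| "topv g (Mu A) = topv (False # g) A"

definition top_variant :: "ty \<Rightarrow> bool" where
  "top_variant A = topv [] A"

fun proper :: "nat \<Rightarrow> ty \<Rightarrow> bool" where
  "proper k (Var j) = (j \<noteq> k)"
| "proper k (Later A) = True"
| "proper k (Arr A B) = ((proper k A \<and> proper k B) \<or> top_variant B)"
| "proper k (Mu A) = (proper (Suc k) A \<or> top_variant (Mu A))"

text \<open>Type expressions.\<close>
fun wf :: "ty \<Rightarrow> bool" where
  "wf (Var j) = True"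
| "wf (Arr A B) = (wf A \<and> wf B)"
| "wf (Later A) = wf A"
| "wf (Mu A) = (wf A \<and> proper 0 A)"

inductive eqT :: "ty \<Rightarrow> ty \<Rightarrow> bool" where
  refl: "wf A \<Longrightarrow> eqT A A"
| sym: "eqT A B \<Longrightarrow> eqT B A"
| trans: "eqT A B \<Longrightarrow> eqT B C \<Longrightarrow> eqT A C"
| later: "eqT A B \<Longrightarrow> eqT (Later A) (Later B)"
| arr: "eqT A C \<Longrightarrow> eqT B D \<Longrightarrow> eqT (Arr A B) (Arr C D)"
| arr_top: "wf A \<Longrightarrow> eqT (Arr A top) top"
| unfold: "wf (Mu A) \<Longrightarrow> eqT (Mu A) (subst 0 (Mu A) A)"
| fixpt: "wf A \<Longrightarrow> wf C \<Longrightarrow> proper 0 C \<Longrightarrow> eqT A (subst 0 A C) \<Longrightarrow> eqT A (Mu C)"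

inductive eqS :: "ty \<Rightarrow> ty \<Rightarrow> bool" where
  refl: "wf A \<Longrightarrow> eqS A A"
| sym: "eqS A B \<Longrightarrow> eqS B A"
| trans: "eqS A B \<Longrightarrow> eqS B C \<Longrightarrow> eqS A C"
| later: "eqS A B \<Longrightarrow> eqS (Later A) (Later B)"
| arr: "eqS A C \<Longrightarrow> eqS B D \<Longrightarrow> eqS (Arr A B) (Arr C D)"
| arr_top: "wf A \<Longrightarrow> eqS (Arr A top) top"
| unfold: "wf (Mu A) \<Longrightarrow> eqS (Mu A) (subst 0 (Mu A) A)"
| fixpt: "wf A \<Longrightarrow> wf C \<Longrightarrow> proper 0 C \<Longrightarrow> eqS A (subst 0 A C) \<Longrightarrow> eqS A (Mu C)"
| later_arr: "wf A \<Longrightarrow> wf B \<Longrightarrow> eqS (Later (Arr A B)) (Arr (Later A) (Later B))"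

end

theory Submission
  imports Defs
begin

text \<open>Both equalities preserve the tail of a type, normalised to either \<open>\<bullet>\<^sup>n X\<close> with \<open>X\<close> free
  or the tail of a \<open>\<top>\<close>-variant; the tail of \<open>\<bullet>A\<close> has one bullet more than that of \<open>A\<close>, and the
  tail of \<open>B \<rightarrow> C\<close> is that of \<open>C\<close>.  A type whose tail is that of a \<open>\<top>\<close>-variant is equal to \<open>\<top>\<close>,
  by induction on the number of binders other than \<open>\<top>\<close>.  When the tail is finite, \<open>\<cong>\<close> also
  preserves whether a type is an arrow under a prefix of \<open>\<mu>\<close>'s, which \<open>\<bullet>A\<close> never is; this gives
  (1).  For \<open>\<simeq>\<close> the prefix may also contain \<open>\<bullet>\<close>, and \<open>\<simeq>\<close> respects the domain and codomain
  obtained by pushing that prefix through the arrow; applied to \<open>\<bullet>A \<simeq> B \<rightarrow> C\<close> this gives (2b),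
  with \<open>D, E\<close> the domain and codomain of \<open>A\<close>.\<close>

lemma lift_lift:
  "i \<le> k \<Longrightarrow> lift (Suc k) (lift i t) = lift i (lift k t)"
  by (induct t arbitrary: i k) auto

lemma lift_subst [simp]:
  "j \<le> i \<Longrightarrow> lift i (subst j s t) = subst j (lift i s) (lift (Suc i) t)"
  by (induct t arbitrary: i j s) (simp_all add: diff_Suc lift_lift split: nat.split)

lemma lift_subst_lt:
  "i \<le> j \<Longrightarrow> lift i (subst j s t) = subst (Suc j) (lift i s) (lift i t)"
  by (induct t arbitrary: i j s) (auto simp: lift_lift)

lemma subst_lift [simp]: "subst k s (lift k t) = t"
  by (induct t arbitrary: k s) simp_all

lemma subst_subst:
  "i \<le> j \<Longrightarrow> subst i (subst j v u) (subst (Suc j) (lift i v) t) = subst j v (subst i u t)"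
  by (induct t arbitrary: i j u v)
    (simp_all add: diff_Suc lift_lift [symmetric] lift_subst_lt split: nat.split)

lemma subst_subst0:
  "subst 0 (subst j v u) (subst (Suc j) (lift 0 v) t) = subst j v (subst 0 u t)"
  by (rule subst_subst) simp

lemma lift_top [simp]: "lift k top = top"
  and subst_top [simp]: "subst k s top = top"
  and proper_top [simp]: "proper k top"
  and wf_top [simp]: "wf top"
  by (simp_all add: top_def)

lemma topv_lift: "length g \<le> k \<Longrightarrow> topv g (lift k X) = topv g X"
  by (induct X arbitrary: g k) auto

lemma topv_subst: "topv g X \<Longrightarrow> length g \<le> k \<Longrightarrow> topv g (subst k s X)"
  by (induct X arbitrary: g k s) auto

lemma top_variant_lift [simp]: "top_variant (lift k X) = top_variant X"
  by (simp add: top_variant_def topv_lift)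

lemma top_variant_Mu_lift [simp]: "top_variant (Mu (lift (Suc i) A)) = top_variant (Mu A)"
  by (simp add: top_variant_def topv_lift)

lemma top_variant_subst: "top_variant X \<Longrightarrow> top_variant (subst k s X)"
  by (simp add: top_variant_def topv_subst)

lemma proper_lift_less: "proper j A \<Longrightarrow> j < i \<Longrightarrow> proper j (lift i A)"
  by (induct A arbitrary: i j) auto

lemma proper_lift_ge: "proper j A \<Longrightarrow> i \<le> j \<Longrightarrow> proper (Suc j) (lift i A)"
  by (induct A arbitrary: i j) auto

lemma proper_lift_self: "proper j (lift j A)"
  by (induct A arbitrary: j) auto

lemma proper_below_lift0: "\<forall>i<k. proper i s \<Longrightarrow> \<forall>i<Suc k. proper i (lift 0 s)"
  by (auto simp: less_Suc_eq_0_disj proper_lift_self intro: proper_lift_ge)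

lemma wf_lift: "wf A \<Longrightarrow> wf (lift i A)"
  by (induct A arbitrary: i) (auto intro: proper_lift_less)

lemma proper_subst:
  "proper j X \<Longrightarrow> j < k \<Longrightarrow> \<forall>i<k. proper i s \<Longrightarrow> proper j (subst k s X)"
proof (induct X arbitrary: j k s)
  case (Mu A)
  then show ?case
    using proper_below_lift0 [OF Mu.prems(3)] by (auto dest: top_variant_subst [where k = k and s = s])
qed (auto intro: top_variant_subst)

lemma wf_subst: "wf X \<Longrightarrow> wf s \<Longrightarrow> \<forall>i<k. proper i s \<Longrightarrow> wf (subst k s X)"
proof (induct X arbitrary: k s)
  case (Mu A)
  then show ?case
    using proper_below_lift0 [OF Mu.prems(3)] by (auto intro: proper_subst wf_lift)
qed auto

lemma wf_subst0: "wf X \<Longrightarrow> wf s \<Longrightarrow> wf (subst 0 s X)"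
  by (simp add: wf_subst)

declare eqT.trans [trans] eqS.trans [trans]

lemma eqS_wf: "eqS X Y \<Longrightarrow> wf X \<and> wf Y"
  by (induct rule: eqS.induct) (auto intro: wf_subst0)

lemma eqS_if_eqT: "eqT X Y \<Longrightarrow> eqS X Y"
  by (induct rule: eqT.induct) (auto intro: eqS.intros)

lemma eqS_lift: "eqS X Y \<Longrightarrow> eqS (lift i X) (lift i Y)"
proof (induct arbitrary: i rule: eqS.induct)
  case (unfold A)
  then show ?case using eqS.unfold [of "lift (Suc i) A"] wf_lift [OF unfold(1), of i] by simp
next
  case (fixpt A C)
  then show ?case using eqS.fixpt [of "lift i A" "lift (Suc i) C"]
    by (simp add: wf_lift proper_lift_less)
qed (auto intro: eqS.intros wf_lift)

lemma eqS_subst: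
  "eqS X Y \<Longrightarrow> wf s \<Longrightarrow> \<forall>j<k. proper j s \<Longrightarrow> eqS (subst k s X) (subst k s Y)"
proof (induct arbitrary: k s rule: eqS.induct)
  case (unfold A)
  have "wf (subst k s (Mu A))" using unfold by (intro wf_subst) auto
  then show ?case using eqS.unfold [of "subst (Suc k) (lift 0 s) A"]
    by (simp add: subst_subst0 [symmetric])
next
  case (fixpt A C)
  have p: "\<forall>i<Suc k. proper i (lift 0 s)" using proper_below_lift0 [OF fixpt.prems(2)] .
  have "wf (subst (Suc k) (lift 0 s) C)" using fixpt p by (intro wf_subst wf_lift) auto
  moreover have "proper 0 (subst (Suc k) (lift 0 s) C)" using fixpt p by (intro proper_subst) auto
  moreover have "wf (subst k s A)" using fixpt by (intro wf_subst) auto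
  ultimately show ?case using fixpt eqS.fixpt [of "subst k s A" "subst (Suc k) (lift 0 s) C"]
    by (simp add: subst_subst0 [symmetric])
next
  case (trans A B C)
  then show ?case by (meson eqS.trans)
qed (auto intro: eqS.intros wf_subst)

lemma eqS_Mu: "eqS X Y \<Longrightarrow> proper 0 X \<Longrightarrow> proper 0 Y \<Longrightarrow> eqS (Mu X) (Mu Y)"
proof -
  assume e: "eqS X Y" and p: "proper 0 X" "proper 0 Y"
  have w: "wf X" "wf Y" using eqS_wf [OF e] by auto
  have "eqS (Mu X) (subst 0 (Mu X) X)" using w p by (intro eqS.unfold) auto
  also have "eqS \<dots> (subst 0 (Mu X) Y)" using w p by (intro eqS_subst e) auto
  finally show ?thesis using w p by (intro eqS.fixpt) auto
qed

lemma eqS_subst_arg: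
  "wf T \<Longrightarrow> eqS A A' \<Longrightarrow> \<forall>i<k. proper i A \<Longrightarrow> \<forall>i<k. proper i A' \<Longrightarrow>
    eqS (subst k A T) (subst k A' T)"
proof (induct T arbitrary: k A A')
  case (Var j)
  then show ?case using eqS_wf [OF Var(2)] by (auto intro: eqS.intros)
next
  case (Mu T)
  note p = proper_below_lift0 [OF Mu.prems(3)] proper_below_lift0 [OF Mu.prems(4)]
  have "eqS (subst (Suc k) (lift 0 A) T) (subst (Suc k) (lift 0 A') T)"
    using Mu p by (auto intro: eqS_lift)
  then show ?case using Mu p by (auto intro!: eqS_Mu proper_subst)
qed (auto intro: eqS.intros)

text \<open>Normal forms of tails: \<open>TVar n j\<close> is \<open>\<bullet>\<^sup>n\<close> applied to the free variable with index \<open>j\<close>,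
  and \<open>TTop\<close> is the tail of a \<open>\<top>\<close>-variant.\<close>
datatype tail_form = TVar nat nat | TTop

fun later_tail :: "nat \<Rightarrow> tail_form \<Rightarrow> tail_form" where
  "later_tail n (TVar m j) = TVar (n + m) j"
| "later_tail n TTop = TTop"

fun lift_tail :: "nat \<Rightarrow> tail_form \<Rightarrow> tail_form" where
  "lift_tail k (TVar n j) = TVar n (if j < k then j else Suc j)"
| "lift_tail k TTop = TTop"

fun subst_tail :: "nat \<Rightarrow> tail_form \<Rightarrow> tail_form \<Rightarrow> tail_form" where
  "subst_tail k t (TVar n j) =
     (if j < k then TVar n j else if j = k then later_tail n t else TVar n (j - 1))"
| "subst_tail k t TTop = TTop"

fun tail :: "ty \<Rightarrow> tail_form" where
  "tail (Var j) = TVar 0 j"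
| "tail (Arr A B) = tail B"
| "tail (Later A) = later_tail 1 (tail A)"
| "tail (Mu A) = (case tail A of TVar n 0 \<Rightarrow> TTop | TVar n (Suc j) \<Rightarrow> TVar n j | TTop \<Rightarrow> TTop)"

lemma later_tail_lift_tail [simp]: "later_tail n (lift_tail k t) = lift_tail k (later_tail n t)"
  by (cases t) auto

lemma later_tail_later_tail [simp]: "later_tail n (later_tail m t) = later_tail (n + m) t"
  by (cases t) auto

lemma later_tail_0 [simp]: "later_tail 0 t = t"
  by (cases t) auto

lemma later_tail_eq_TTop [simp]: "later_tail n t = TTop \<longleftrightarrow> t = TTop"
  by (cases t) auto

lemma later_tail_subst_tail [simp]: "later_tail n (subst_tail k u t) = subst_tail k u (later_tail n t)"
  by (cases t) auto

lemma tail_lift [simp]: "tail (lift k X) = lift_tail k (tail X)"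
  by (induct X arbitrary: k) (auto split: tail_form.split nat.split)

lemma tail_subst: "tail (subst k s X) = subst_tail k (tail s) (tail X)"
proof (induct X arbitrary: k s)
  case (Mu A)
  then show ?case by (cases "tail A"; cases "tail s") (auto split: nat.split)
qed auto

lemma tail_top [simp]: "tail top = TTop"
  by (simp add: top_def)

lemma topv_tail:
  "topv g B \<Longrightarrow> tail B = TTop \<or> (\<exists>n j. tail B = TVar n j \<and> j < length g \<and> (0 < n \<or> g ! j))"
proof (induct B arbitrary: g)
  case (Later A)
  then show ?case by (cases "tail A") fastforce+
next
  case (Mu A)
  then show ?case using Mu.hyps [of "False # g"] by (auto split: tail_form.split nat.split simp: nth_Cons')
qed auto

lemma tail_top_variant: "top_variant B \<Longrightarrow> tail B = TTop"
  using topv_tail [of "[]" B] by (auto simp: top_variant_def)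

lemma tail_proper: "proper k C \<Longrightarrow> tail C \<noteq> TVar 0 k"
proof (induct C arbitrary: k)
  case (Later A)
  then show ?case by (cases "tail A") auto
next
  case (Mu A)
  then show ?case using tail_top_variant [of "Mu A"] by (auto split: tail_form.split nat.split)
qed (auto dest: tail_top_variant)

text \<open>A guarded recursive occurrence of the bound variable in the tail forces a fixed point
  of \<open>later_tail n\<close> with \<open>n > 0\<close>, which can only be \<open>TTop\<close>.\<close>
lemma tail_fixpoint:
  assumes "proper 0 C" and "subst_tail 0 t (tail C) = t"
  shows "t = tail (Mu C)" and "t \<noteq> TTop \<Longrightarrow> tail C \<noteq> TVar n 0"
  using assms tail_proper [of 0 C]
  by (cases "tail C"; cases t; auto split: nat.splits if_splits)+

lemma eqS_tail: "eqS X Y \<Longrightarrow> tail X = tail Y"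
proof (induct rule: eqS.induct)
  case (unfold A)
  then show ?case by (auto simp: tail_subst split: tail_form.splits nat.splits)
next
  case (fixpt A C)
  then show ?case using tail_fixpoint(1) [of C "tail A"] by (simp add: tail_subst)
qed auto

lemma eqT_tail: "eqT X Y \<Longrightarrow> tail X = tail Y"
  by (intro eqS_tail eqS_if_eqT)

lemma top_eqT_later_top: "eqT top (Later top)"
  using eqT.unfold [of "Later (Var 0)"] by (simp add: top_def)

text \<open>Substituting \<open>\<top>\<close> for a variable creates no new binders other than copies of \<open>\<top>\<close>,
  so the number of binders that are not \<open>\<top>\<close> is a suitable induction measure.\<close>
fun nontop_mus :: "ty \<Rightarrow> nat" where
  "nontop_mus (Var j) = 0"
| "nontop_mus (Arr A B) = nontop_mus A + nontop_mus B"
| "nontop_mus (Later A) = nontop_mus A"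
| "nontop_mus (Mu A) = (if Mu A = top then 0 else Suc (nontop_mus A))"

lemma nontop_mus_subst_top: "nontop_mus (subst k top X) \<le> nontop_mus X"
  by (induct X arbitrary: k) (auto simp: top_def intro!: add_mono)

lemma eqT_top_if_tail_top: "wf X \<Longrightarrow> tail X = TTop \<Longrightarrow> eqT X top"
proof (induction X rule: wf_induct [OF wf_measures [of "[nontop_mus, size]"]])
  case (1 X)
  have IH: "eqT Y top" if "nontop_mus Y < nontop_mus X \<or> nontop_mus Y = nontop_mus X \<and> size Y < size X"
    and "wf Y" and "tail Y = TTop" for Y
    using 1 that by (auto simp: measures_def)
  show ?case
  proof (cases X)
    case (Arr A B)
    then have "eqT B top" using 1 by (intro IH) auto
    then have "eqT (Arr A B) (Arr A top)" using 1 Arr by (auto intro: eqT.arr eqT.refl)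
    also have "eqT \<dots> top" using 1 Arr by (auto intro: eqT.arr_top)
    finally show ?thesis using Arr by simp
  next
    case (Later A)
    then have "tail A = TTop" using 1 by (cases "tail A") auto
    then have "eqT A top" using 1 Later by (intro IH) auto
    then have "eqT (Later A) (Later top)" by (rule eqT.later)
    also have "eqT \<dots> top" by (rule eqT.sym [OF top_eqT_later_top])
    finally show ?thesis using Later by simp
  next
    case (Mu A)
    show ?thesis
    proof (cases "X = top")
      case False
      have A: "wf A" "proper 0 A" using 1 Mu by auto
      have "tail (subst 0 top A) = TTop"
        using 1 Mu by (auto simp: tail_subst split: tail_form.splits nat.splits)
      moreover have "nontop_mus (subst 0 top A) < nontop_mus X"
        using nontop_mus_subst_top [of 0 A] False Mu by simp
      ultimately have "eqT (subst 0 top A) top" using A by (intro IH wf_subst0) auto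
      then have "eqT top (Mu A)" using A by (intro eqT.fixpt) (auto intro: eqT.sym)
      then show ?thesis using Mu by (simp add: eqT.sym)
    qed (auto intro: eqT.refl)
  qed (use 1 in auto)
qed

fun mu_head_var :: "ty \<Rightarrow> nat \<Rightarrow> bool" where
  "mu_head_var (Var j) k = (j = k)"
| "mu_head_var (Arr A B) k = False"
| "mu_head_var (Later A) k = False"
| "mu_head_var (Mu A) k = mu_head_var A (Suc k)"

fun head_var :: "ty \<Rightarrow> nat \<Rightarrow> bool" where
  "head_var (Var j) k = (j = k)"
| "head_var (Arr A B) k = False"
| "head_var (Later A) k = head_var A k"
| "head_var (Mu A) k = head_var A (Suc k)"

fun mu_arrow :: "ty \<Rightarrow> bool" where
  "mu_arrow (Var j) = False"
| "mu_arrow (Arr A B) = True"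
| "mu_arrow (Later A) = False"
| "mu_arrow (Mu A) = mu_arrow A"

fun head_arrow :: "ty \<Rightarrow> bool" where
  "head_arrow (Var j) = False"
| "head_arrow (Arr A B) = True"
| "head_arrow (Later A) = head_arrow A"
| "head_arrow (Mu A) = head_arrow A"

lemma mu_arrow_lift [simp]: "mu_arrow (lift k X) = mu_arrow X"
  by (induct X arbitrary: k) auto

lemma head_arrow_lift [simp]: "head_arrow (lift k X) = head_arrow X"
  by (induct X arbitrary: k) auto

lemma mu_arrow_subst: "mu_arrow (subst k s X) = (mu_arrow X \<or> mu_head_var X k \<and> mu_arrow s)"
  by (induct X arbitrary: k s) auto

lemma head_arrow_subst: "head_arrow (subst k s X) = (head_arrow X \<or> head_var X k \<and> head_arrow s)"
  by (induct X arbitrary: k s) auto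

lemma tail_if_mu_head_var: "mu_head_var X k \<Longrightarrow> \<exists>n. tail X = TVar n k"
  by (induct X arbitrary: k) fastforce+

lemma tail_if_head_var: "head_var X k \<Longrightarrow> \<exists>n. tail X = TVar n k"
  by (induct X arbitrary: k) fastforce+

lemma eqT_mu_arrow: "eqT X Y \<Longrightarrow> tail X \<noteq> TTop \<Longrightarrow> mu_arrow X = mu_arrow Y"
proof (induct rule: eqT.induct)
  case (trans A B C)
  then show ?case by (simp add: eqT_tail)
next
  case (unfold A)
  then show ?case by (auto simp: mu_arrow_subst)
next
  case (fixpt A C)
  have "tail A = subst_tail 0 (tail A) (tail C)"
    using eqT_tail [OF fixpt(4)] by (simp add: tail_subst)
  then have "\<not> mu_head_var C 0"
    using tail_fixpoint(2) [of C "tail A"] fixpt(3,6) tail_if_mu_head_var [of C 0] by force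
  then show ?case using fixpt(5,6) by (simp add: mu_arrow_subst)
qed (auto dest: eqT_tail)

lemma eqS_head_arrow: "eqS X Y \<Longrightarrow> tail X \<noteq> TTop \<Longrightarrow> head_arrow X = head_arrow Y"
proof (induct rule: eqS.induct)
  case (trans A B C)
  then show ?case by (simp add: eqS_tail)
next
  case (unfold A)
  then show ?case by (auto simp: head_arrow_subst)
next
  case (fixpt A C)
  have "tail A = subst_tail 0 (tail A) (tail C)"
    using eqS_tail [OF fixpt(4)] by (simp add: tail_subst)
  then have "\<not> head_var C 0"
    using tail_fixpoint(2) [of C "tail A"] fixpt(3,6) tail_if_head_var [of C 0] by force
  then show ?case using fixpt(5,6) by (simp add: head_arrow_subst)
qed (auto dest: eqS_tail)

text \<open>Domain and codomain of a type with an arrow head, with the prefix distributed over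
  both sides as licensed by \<open>later_arr\<close> and \<open>unfold\<close>.\<close>
fun arr_dom :: "ty \<Rightarrow> ty" where
  "arr_dom (Var j) = Var j"
| "arr_dom (Arr A B) = A"
| "arr_dom (Later A) = Later (arr_dom A)"
| "arr_dom (Mu A) = subst 0 (Mu A) (arr_dom A)"

fun arr_cod :: "ty \<Rightarrow> ty" where
  "arr_cod (Var j) = Var j"
| "arr_cod (Arr A B) = B"
| "arr_cod (Later A) = Later (arr_cod A)"
| "arr_cod (Mu A) = subst 0 (Mu A) (arr_cod A)"

lemma arr_dom_subst: "head_arrow X \<Longrightarrow> arr_dom (subst k s X) = subst k s (arr_dom X)"
  and arr_cod_subst: "head_arrow X \<Longrightarrow> arr_cod (subst k s X) = subst k s (arr_cod X)"
  by (induct X arbitrary: k s) (auto simp: subst_subst0 [symmetric])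

lemma wf_arr_dom_cod: "wf X \<Longrightarrow> wf (arr_dom X) \<and> wf (arr_cod X)"
  by (induct X) (auto intro: wf_subst0)

lemma eqS_arr_dom_cod:
  "eqS X Y \<Longrightarrow> tail X \<noteq> TTop \<Longrightarrow> head_arrow X \<Longrightarrow>
    eqS (arr_dom X) (arr_dom Y) \<and> eqS (arr_cod X) (arr_cod Y)"
proof (induct rule: eqS.induct)
  case (refl A)
  then show ?case using wf_arr_dom_cod [OF refl(1)] by (auto intro: eqS.refl)
next
  case (sym A B)
  then show ?case using eqS_tail eqS_head_arrow by (metis eqS.sym)
next
  case (trans A B C)
  then show ?case using eqS_tail eqS_head_arrow by (metis eqS.trans)
next
  case (unfold A)
  then show ?case using wf_arr_dom_cod [OF unfold(1)]
    by (auto simp: arr_dom_subst arr_cod_subst intro: eqS.refl)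
next
  case (fixpt A C)
  have AC: "eqS A (Mu C)" using fixpt by (intro eqS.fixpt) auto
  have "head_arrow C"
    using eqS_head_arrow [OF AC] fixpt(6,7) by simp
  then have "eqS (arr_dom A) (subst 0 A (arr_dom C))" "eqS (arr_cod A) (subst 0 A (arr_cod C))"
    using fixpt(5-7) by (auto simp: arr_dom_subst arr_cod_subst)
  moreover have "eqS (subst 0 A (arr_dom C)) (arr_dom (Mu C))"
    "eqS (subst 0 A (arr_cod C)) (arr_cod (Mu C))"
    using wf_arr_dom_cod [OF fixpt(2)] AC by (auto intro: eqS_subst_arg)
  ultimately show ?case by (auto intro: eqS.trans)
qed (auto intro: eqS.later eqS.refl)

lemma eqS_Arr_arr_dom_cod: "wf X \<Longrightarrow> head_arrow X \<Longrightarrow> eqS X (Arr (arr_dom X) (arr_cod X))"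
proof (induct X)
  case (Arr A B)
  then show ?case by (auto intro: eqS.refl)
next
  case (Later Y)
  have "eqS (Later Y) (Later (Arr (arr_dom Y) (arr_cod Y)))" using Later by (auto intro: eqS.later)
  also have "eqS \<dots> (Arr (Later (arr_dom Y)) (Later (arr_cod Y)))"
    using wf_arr_dom_cod [of Y] Later by (auto intro: eqS.later_arr)
  finally show ?case by simp
next
  case (Mu Y)
  have "eqS (Mu Y) (subst 0 (Mu Y) Y)" using Mu by (intro eqS.unfold)
  also have "eqS \<dots> (subst 0 (Mu Y) (Arr (arr_dom Y) (arr_cod Y)))"
    using Mu by (intro eqS_subst) auto
  finally show ?case by simp
qed auto

theorem proposition4:
  assumes "wf A" and "wf B" and "wf C"
  shows "(eqT (Later A) (Arr B C) \<longrightarrow> eqT A C \<and> eqT C top)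
    \<and> (eqS (Later A) (Arr B C) \<longrightarrow>
         (eqS A C \<and> eqS C top)
       \<or> (\<exists>D E. wf D \<and> wf E \<and> eqS A (Arr D E) \<and> eqS (Later D) B \<and> eqS (Later E) C))"
proof (rule conjI; rule impI)
  assume e: "eqT (Later A) (Arr B C)"
  have "tail A = TTop"
    using eqT_mu_arrow [OF e] by auto
  moreover from this have "tail C = TTop"
    using eqT_tail [OF e] by simp
  ultimately have "eqT A top" and "eqT C top"
    using assms by (auto intro: eqT_top_if_tail_top)
  then show "eqT A C \<and> eqT C top" by (auto intro: eqT.trans eqT.sym)
next
  assume e: "eqS (Later A) (Arr B C)"
  show "(eqS A C \<and> eqS C top)
       \<or> (\<exists>D E. wf D \<and> wf E \<and> eqS A (Arr D E) \<and> eqS (Later D) B \<and> eqS (Later E) C)"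
  proof (cases "tail A = TTop")
    case True
    moreover from this have "tail C = TTop"
      using eqS_tail [OF e] by simp
    ultimately have "eqS A top" and "eqS C top"
      using assms by (auto intro: eqS_if_eqT eqT_top_if_tail_top)
    then show ?thesis by (auto intro: eqS.trans eqS.sym)
  next
    case False
    then have "tail (Later A) \<noteq> TTop" by simp
    with eqS_head_arrow [OF e] eqS_arr_dom_cod [OF e] have "head_arrow A"
      and "eqS (Later (arr_dom A)) B" and "eqS (Later (arr_cod A)) C" by auto
    moreover have "eqS A (Arr (arr_dom A) (arr_cod A))"
      using eqS_Arr_arr_dom_cod assms(1) \<open>head_arrow A\<close> by blast
    ultimately show ?thesis using wf_arr_dom_cod [OF assms(1)] by blast
  qed
qed

end
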